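(* Let \[ G=\begin{pmatrix}a&b\\ c&d\end{pmatrix},\qquad A=\begin{pmatrix}\alpha&\beta\\ \beta&\gamma\end{pmatrix} \quad(\alpha>0,\ \delta:=\det A=\alpha\gamma-\beta^{2}>0). \] Then there exists a symmetric matrix $S=\begin{pmatrix}s_{11}& s_{12}\\ s_{12}& s_{22}\end{pmatrix}$ satisfying \[ SG+G^TS=2SAS\quad \text{and}\quad \mathrm{trace}(G-AS)=0, \] given as follows: \begin{itemize} \item[(i)] If $\gamma b -\alpha c + \beta(a-d) =0$, then $S = A^{-1}G$, in particular \[ s_{11} = \frac{\gamma a - \beta c}{\alpha\gamma - \beta^2}, \qquad s_{12} = \frac{\gamma b - \beta d}{\alpha\gamma - \beta^2}, \qquad s_{22} = \frac{\alpha d - \beta b}{\alpha\gamma - \beta^2}. \] \item[(ii)] If $a+d=0$, then $S=0$. \item[(iii)] If $a+d \neq 0$ and $\gamma b- \alpha c + \beta(a-d) \neq 0$, then \begin{align*} s_{11} &= \frac{a+d}{ (\alpha \gamma-\beta^2) (a+d)^2 +\big( \gamma b - \alpha c + \beta(a-d)\big)^2} \Big( \gamma a(a+d) + \alpha c^2 - \gamma bc - 2\beta ac \Big), \\ s_{12} &= \frac{a+d}{ (\alpha \gamma-\beta^2) (a+d)^2 +\big( \gamma b - \alpha c + \beta(a-d)\big)^2} \Big( \alpha cd + \gamma ab - 2\beta ad \Big), \\ s_{22} &= \frac{a+d}{ (\alpha \gamma-\beta^2) (a+d)^2 +\big(\gamma b - \alpha c + \beta(a-d)\big)^2} \Big(\alpha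 d(a+d) + \gamma b^2 - \alpha bc - 2\beta bd \Big). \end{align*} \end{itemize}
   Context: All entries are real; $d=2$ dimension is implicit (here $d$ also denotes the matrix entry $g_{22}$). *)

theory Defs
  imports "HOL-Analysis.Analysis"
begin

definition mat2 :: "real \<Rightarrow> real \<Rightarrow> real \<Rightarrow> real \<Rightarrow> real^2^2" where
  "mat2 p q r s = vector [vector [p, q], vector [r, s]]"

definition solves_eq :: "real^2^2 \<Rightarrow> real^2^2 \<Rightarrow> real^2^2 \<Rightarrow> bool" where
  "solves_eq G A S \<longleftrightarrow> transpose S = S \<and>
     S ** G + transpose G ** S = 2 *\<^sub>R (S ** A ** S) \<and> trace (G - A ** S) = 0"

end

theory Submission
  imports Defs
begin

text \<open>
  If G = A S with A and S symmetric, then G^T = S A, so S G + G^T S = 2 S A S and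
  trace (G - A S) = 0; when \<gamma> b - \<alpha> c + \<beta> (a - d) = 0 the matrix A^-1 G is symmetric,
  so S = A^-1 G works. In general one makes the ansatz
  S = k P with the symmetric matrix P = G^T adj(A) G + det(G) adj(A). A polynomial
  computation gives trace (A P) = E and E (P G + G^T P) = 2 trace(G) P A P, where
  E = det(A) (a + d)^2 + (\<gamma> b - \<alpha> c + \<beta> (a - d))^2. The trace condition forces
  k = trace(G) / E, and this k solves the quadratic equation as well.
\<close>

lemma mat2_eq_iff:
  "mat2 p q r s = mat2 p' q' r' s' \<longleftrightarrow> p = p' \<and> q = q' \<and> r = r' \<and> s = s'"
  by (auto simp: mat2_def vec_eq_iff forall_2)

lemma mat2_mult:
  "mat2 p q r s ** mat2 p' q' r' s' =
     mat2 (p * p' + q * r') (p * q' + q * s') (r * p' + s * r') (r * q' + s * s')"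
  by (simp add: mat2_def matrix_matrix_mult_def vec_eq_iff forall_2 sum_2)

lemma mat2_add: "mat2 p q r s + mat2 p' q' r' s' = mat2 (p + p') (q + q') (r + r') (s + s')"
  by (simp add: mat2_def vec_eq_iff forall_2)

lemma mat2_scaleR: "k *\<^sub>R mat2 p q r s = mat2 (k * p) (k * q) (k * r) (k * s)"
  by (simp add: mat2_def vec_eq_iff forall_2)

lemma mat2_one: "(mat 1 :: real^2^2) = mat2 1 0 0 1"
  by (simp add: mat2_def mat_def vec_eq_iff forall_2)

lemma transpose_mat2: "transpose (mat2 p q r s) = mat2 p r q s"
  by (simp add: mat2_def transpose_def vec_eq_iff forall_2)

lemma trace_mat2: "trace (mat2 p q r s) = p + s"
  by (simp add: mat2_def trace_def sum_2)

lemma det_mat2: "det (mat2 p q r s) = p * s - q * r"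
  by (simp add: mat2_def det_2)

lemma trace_scaleR: "trace (k *\<^sub>R A) = k * trace (A :: real^'n^'n)"
  by (simp add: trace_def sum_distrib_left)

lemma matrix_inv_inverse:
  fixes A :: "'a::semiring_1^'n^'m"
  assumes "invertible A"
  shows "A ** matrix_inv A = mat 1" and "matrix_inv A ** A = mat 1"
  using someI_ex[OF assms[unfolded invertible_def]] by (simp_all add: matrix_inv_def)

lemma matrix_inv_unique:
  fixes A B :: "'a::semiring_1^'n^'n"
  assumes "A ** B = mat 1" and "B ** A = mat 1"
  shows "matrix_inv A = B"
proof -
  have "invertible A"
    using assms unfolding invertible_def by blast
  have "matrix_inv A = matrix_inv A ** (A ** B)"
    by (simp add: assms(1))
  also have "\<dots> = (matrix_inv A ** A) ** B"
    by (rule matrix_mul_assoc)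
  finally show ?thesis
    by (simp add: matrix_inv_inverse \<open>invertible A\<close>)
qed

lemma matrix_inv_mat2:
  assumes "p * s - q * r \<noteq> 0"
  shows "matrix_inv (mat2 p q r s) = (1 / (p * s - q * r)) *\<^sub>R mat2 s (- q) (- r) p"
  by (rule matrix_inv_unique)
     (use assms in \<open>simp_all add: mat2_mult mat2_scaleR mat2_one mat2_eq_iff mult.commute
       flip: diff_divide_distrib\<close>)

lemma solves_eq_mult_symmetric:
  fixes A S :: "real^2^2"
  assumes "transpose A = A" and "transpose S = S"
  shows "solves_eq (A ** S) A S"
  using assms by (simp add: solves_eq_def matrix_transpose_mul matrix_mul_assoc scaleR_2 trace_def)

lemma solves_eq_matrix_inv_mult:
  fixes G A :: "real^2^2"
  assumes "invertible A" and "transpose A = A"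
    and "transpose (matrix_inv A ** G) = matrix_inv A ** G"
  shows "solves_eq G A (matrix_inv A ** G)"
proof -
  have "A ** (matrix_inv A ** G) = G"
    by (simp add: matrix_mul_assoc matrix_inv_inverse assms(1))
  then show ?thesis
    using solves_eq_mult_symmetric[OF assms(2,3)] by simp
qed

lemma solves_eq_zero:
  fixes G A :: "real^2^2"
  assumes "trace G = 0"
  shows "solves_eq G A 0"
proof -
  have "transpose (0 :: real^2^2) = 0"
    by (simp add: transpose_def vec_eq_iff)
  then show ?thesis
    using assms by (simp add: solves_eq_def)
qed

lemma solves_eq_scaleR:
  fixes G A P :: "real^2^2" and E :: real
  assumes sym: "transpose P = P" and "E \<noteq> 0" and trace_AP: "trace (A ** P) = E"
    and eq: "E *\<^sub>R (P ** G + transpose G ** P) = (2 * trace G) *\<^sub>R (P ** A ** P)"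
  shows "solves_eq G A ((trace G / E) *\<^sub>R P)"
proof -
  define k where "k = trace G / E"
  have eq': "P ** G + transpose G ** P = (2 * k) *\<^sub>R (P ** A ** P)"
  proof -
    have "P ** G + transpose G ** P = (1 / E) *\<^sub>R (E *\<^sub>R (P ** G + transpose G ** P))"
      using \<open>E \<noteq> 0\<close> by simp
    also have "\<dots> = (2 * k) *\<^sub>R (P ** A ** P)"
      unfolding eq k_def by simp
    finally show ?thesis .
  qed
  have "(k *\<^sub>R P) ** G + transpose G ** (k *\<^sub>R P) = k *\<^sub>R (P ** G + transpose G ** P)"
    by (simp add: matrix_scalar_ac scaleR_add_right flip: scalar_matrix_assoc)
  also have "\<dots> = 2 *\<^sub>R ((k *\<^sub>R P) ** A ** (k *\<^sub>R P))"
    by (simp add: eq' matrix_scalar_ac mult_ac flip: scalar_matrix_assoc)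
  finally have "(k *\<^sub>R P) ** G + transpose G ** (k *\<^sub>R P) = 2 *\<^sub>R ((k *\<^sub>R P) ** A ** (k *\<^sub>R P))" .
  moreover have "trace (G - A ** (k *\<^sub>R P)) = 0"
    using \<open>E \<noteq> 0\<close>
    by (simp add: trace_sub trace_scaleR trace_AP k_def matrix_scalar_ac flip: scalar_matrix_assoc)
  ultimately show ?thesis
    unfolding solves_eq_def k_def[symmetric] by (simp add: transpose_scalar sym)
qed

lemma matrix_inv_mult_mat2:
  fixes a b c d \<alpha> \<beta> \<gamma> :: real
  defines "\<delta> \<equiv> \<alpha> * \<gamma> - \<beta>^2"
  assumes "\<delta> \<noteq> 0" and "\<gamma> * b - \<alpha> * c + \<beta> * (a - d) = 0"
  shows "matrix_inv (mat2 \<alpha> \<beta> \<beta> \<gamma>) ** mat2 a b c d =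
    mat2 ((\<gamma> * a - \<beta> * c) / \<delta>) ((\<gamma> * b - \<beta> * d) / \<delta>) ((\<gamma> * b - \<beta> * d) / \<delta>) ((\<alpha> * d - \<beta> * b) / \<delta>)"
proof -
  have "matrix_inv (mat2 \<alpha> \<beta> \<beta> \<gamma>) = (1 / \<delta>) *\<^sub>R mat2 \<gamma> (- \<beta>) (- \<beta>) \<alpha>"
    using matrix_inv_mat2[of \<alpha> \<gamma> \<beta> \<beta>] assms(2) by (simp add: \<delta>_def power2_eq_square)
  moreover have "\<alpha> * c - \<beta> * a = \<gamma> * b - \<beta> * d"
    using assms(3) by (simp add: algebra_simps)
  ultimately show ?thesis
    using assms(2) by (simp add: mat2_scaleR mat2_mult mat2_eq_iff field_simps)
qed

lemma solves_eq_mat2_adjugate_form: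
  fixes a b c d \<alpha> \<beta> \<gamma> :: real
  defines "E \<equiv> (\<alpha> * \<gamma> - \<beta>^2) * (a + d)^2 + (\<gamma> * b - \<alpha> * c + \<beta> * (a - d))^2"
    and "P \<equiv> mat2 (\<gamma> * a * (a + d) + \<alpha> * c^2 - \<gamma> * b * c - 2 * \<beta> * a * c)
                 (\<alpha> * c * d + \<gamma> * a * b - 2 * \<beta> * a * d)
                 (\<alpha> * c * d + \<gamma> * a * b - 2 * \<beta> * a * d)
                 (\<alpha> * d * (a + d) + \<gamma> * b^2 - \<alpha> * b * c - 2 * \<beta> * b * d)"
  assumes "E \<noteq> 0"
  shows "solves_eq (mat2 a b c d) (mat2 \<alpha> \<beta> \<beta> \<gamma>) (((a + d) / E) *\<^sub>R P)"
proof -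
  let ?G = "mat2 a b c d" and ?A = "mat2 \<alpha> \<beta> \<beta> \<gamma>"
  have "transpose P = P"
    by (simp add: P_def transpose_mat2)
  moreover have "trace (?A ** P) = E"
    unfolding P_def E_def mat2_mult trace_mat2 by algebra
  moreover have "E *\<^sub>R (P ** ?G + transpose ?G ** P) = (2 * trace ?G) *\<^sub>R (P ** ?A ** P)"
    unfolding P_def E_def mat2_mult transpose_mat2 trace_mat2 mat2_add mat2_scaleR mat2_eq_iff
    by (intro conjI; algebra)
  ultimately show ?thesis
    using solves_eq_scaleR[of P E ?A ?G] \<open>E \<noteq> 0\<close> by (simp add: trace_mat2)
qed

theorem theorem5p5:
  fixes a b c d \<alpha> \<beta> \<gamma> :: real
  assumes "\<alpha> > 0" and "\<alpha> * \<gamma> - \<beta>^2 > 0"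
  shows "(\<exists>S. solves_eq (mat2 a b c d) (mat2 \<alpha> \<beta> \<beta> \<gamma>) S)
    \<and> (\<gamma> * b - \<alpha> * c + \<beta> * (a - d) = 0 \<longrightarrow>
         solves_eq (mat2 a b c d) (mat2 \<alpha> \<beta> \<beta> \<gamma>) (matrix_inv (mat2 \<alpha> \<beta> \<beta> \<gamma>) ** mat2 a b c d)
       \<and> matrix_inv (mat2 \<alpha> \<beta> \<beta> \<gamma>) ** mat2 a b c d =
           mat2 ((\<gamma> * a - \<beta> * c) / (\<alpha> * \<gamma> - \<beta>^2)) ((\<gamma> * b - \<beta> * d) / (\<alpha> * \<gamma> - \<beta>^2))
                ((\<gamma> * b - \<beta> * d) / (\<alpha> * \<gamma> - \<beta>^2)) ((\<alpha> * d - \<beta> * b) / (\<alpha> * \<gamma> - \<beta>^2)))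
    \<and> (a + d = 0 \<longrightarrow> solves_eq (mat2 a b c d) (mat2 \<alpha> \<beta> \<beta> \<gamma>) 0)
    \<and> (a + d \<noteq> 0 \<and> \<gamma> * b - \<alpha> * c + \<beta> * (a - d) \<noteq> 0 \<longrightarrow>
         (let k = (a + d) / ((\<alpha> * \<gamma> - \<beta>^2) * (a + d)^2 + (\<gamma> * b - \<alpha> * c + \<beta> * (a - d))^2)
          in solves_eq (mat2 a b c d) (mat2 \<alpha> \<beta> \<beta> \<gamma>)
               (mat2 (k * (\<gamma> * a * (a + d) + \<alpha> * c^2 - \<gamma> * b * c - 2 * \<beta> * a * c))
                     (k * (\<alpha> * c * d + \<gamma> * a * b - 2 * \<beta> * a * d))
                     (k * (\<alpha> * c * d + \<gamma> * a * b - 2 * \<beta> * a * d))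
                     (k * (\<alpha> * d * (a + d) + \<gamma> * b^2 - \<alpha> * b * c - 2 * \<beta> * b * d)))))"
proof -
  let ?G = "mat2 a b c d" and ?A = "mat2 \<alpha> \<beta> \<beta> \<gamma>"
  define w where "w = \<gamma> * b - \<alpha> * c + \<beta> * (a - d)"
  have \<delta>: "\<alpha> * \<gamma> - \<beta>^2 \<noteq> 0"
    using assms(2) by simp
  have case_i: "solves_eq ?G ?A (matrix_inv ?A ** ?G)" if "w = 0"
  proof (rule solves_eq_matrix_inv_mult)
    show "invertible ?A"
      using \<delta> by (simp add: invertible_det_nz det_mat2 power2_eq_square)
    show "transpose ?A = ?A" and "transpose (matrix_inv ?A ** ?G) = matrix_inv ?A ** ?G"
      using matrix_inv_mult_mat2[OF \<delta>] that by (simp_all add: w_def transpose_mat2)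
  qed
  have case_ii: "solves_eq ?G ?A 0" if "a + d = 0"
    using that by (simp add: solves_eq_zero trace_mat2)
  have E_nonzero: "(\<alpha> * \<gamma> - \<beta>^2) * (a + d)^2 + w^2 \<noteq> 0" if "a + d \<noteq> 0"
    using assms(2) that by (intro add_pos_nonneg[THEN less_imp_neq, symmetric]) auto
  note case_iii = solves_eq_mat2_adjugate_form[OF E_nonzero[unfolded w_def]]
  have "\<exists>S. solves_eq ?G ?A S"
    using case_i case_ii case_iii by blast
  then show ?thesis
    using case_i matrix_inv_mult_mat2[OF \<delta>] case_ii case_iii
    unfolding w_def by (simp add: Let_def mat2_scaleR)
qed

end
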